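(* Let $X=\Gamma\backslash G$ be a compact 2-step nilmanifold with abelian invariant complex structure $J$, and suppose the center $\mathfrak c$ of $\mathfrak g$ has complex dimension $1$ (real dimension $2$). Suppose that every direction of the virtual parameter space $H^1(X,\Theta_X)$ integrates to a 1-parameter family of abelian complex structures; precisely, suppose every $\overline\partial$-closed $\mu\in\mathfrak g^{*(0,1)}\otimes\mathfrak g^{1,0}$ generates an abelian deformation. Then $\mathfrak g$ is isomorphic to $\mathfrak h_{2n+1}\oplus\mathbb R$, the direct sum of the $(2n+1)$-dimensional Heisenberg algebra and the 1-dimensional abelian algebra, where $\dim_{\mathbb R}\mathfrak g=2n+2$ (with the convention $\mathfrak h_1=\mathbb R$).
   Context: $\mathfrak g$ is the Lie algebra of the simply connected group $G$, real 2-step nilpotent, with abelian complex structure $J$ ($J^2=-1$, $[JA,JB]=[A,B]$ for all $A,B$); $\Gamma$ is discrete co-compact; $\Theta_X$ the holomorphic tangent sheaf of $X$. $\mathfrak t$ is a $J$-invariant complement of $\mathfrak c$ with real basis $\{X_j,JX_j\}_{1\le j\le n}$; $\{Z,JZ\}$ a real basis of $\mathfrak c$; $T_j=\frac12(X_j-iJX_j)$, $W=\frac12(Z-iJZ)$ a basis of $\mathfrak g^{1,0}$; $[\overline T_k,T_j]=E_{kj}W+F_{kj}\overline W$ with $F_{kj}=-\overline{E_{jk}}$. $\{\omega^p\}$ is the dual $(1,0)$-basis, $\mathfrak g^{*(0,1)}=\mathrm{span}\{\overline\omega^p\}$, and elements of $\mathfrak g^{*(0,1)}\otimes\mathfrak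 g^{1,0}$ are viewed as maps $\mathfrak g^{0,1}\to\mathfrak g^{1,0}$. $\overline\partial$ on $\mathfrak g^{*(0,1)}\otimes\mathfrak g^{1,0}$: $\overline\partial V=\sum_p\overline\omega^p\otimes[\overline e_p,V]^{1,0}$ for $V\in\mathfrak g^{1,0}$, $\overline\partial\overline\sigma=(d\overline\sigma)^{(0,2)}$, $\overline\partial(\overline\sigma\otimes V)=\overline\partial\overline\sigma\otimes V-\overline\sigma\wedge\overline\partial V$. "$\mu$ generates an abelian deformation" means: there is a power series $\Phi(t)=\sum_{r\ge1}t^r\phi_r$ with $\phi_r\in\mathfrak g^{*(0,1)}\otimes\mathfrak g^{1,0}$, $\phi_1=\mu$, convergent for small real $t$, such that for small $t$ all brackets among the vectors $\overline T_j+\Phi(t)\overline T_j$, $\overline W+\Phi(t)\overline W$ vanish. *)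

theory Defs
  imports "HOL-Analysis.Analysis"
begin

definition lie_algebra :: "('a::real_vector \<Rightarrow> 'a \<Rightarrow> 'a) \<Rightarrow> bool" where
  "lie_algebra br \<longleftrightarrow> bilinear br \<and> (\<forall>x y. br x y = - br y x)
     \<and> (\<forall>x y z. br x (br y z) + br y (br z x) + br z (br x y) = 0)"

definition two_step_nilpotent :: "('a::real_vector \<Rightarrow> 'a \<Rightarrow> 'a) \<Rightarrow> bool" where
  "two_step_nilpotent br \<longleftrightarrow> (\<forall>x y z. br x (br y z) = 0)"

definition lie_center :: "('a::real_vector \<Rightarrow> 'a \<Rightarrow> 'a) \<Rightarrow> 'a set" where
  "lie_center br = {z. \<forall>a. br z a = 0}"

definition abelian_complex_structure ::
  "('a::real_vector \<Rightarrow> 'a \<Rightarrow> 'a) \<Rightarrow> ('a \<Rightarrow> 'a) \<Rightarrow> bool" where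
  "abelian_complex_structure br J \<longleftrightarrow> linear J \<and> (\<forall>a. J (J a) = - a)
     \<and> (\<forall>a b. br (J a) (J b) = br a b)"

text \<open>Existence of a basis with rational structure constants
  (Malcev: equivalent to the existence of a co-compact lattice Gamma in G).\<close>
definition rational_structure :: "('a::euclidean_space \<Rightarrow> 'a \<Rightarrow> 'a) \<Rightarrow> bool" where
  "rational_structure br \<longleftrightarrow> (\<exists>b :: nat \<Rightarrow> 'a. \<exists>c :: nat \<Rightarrow> nat \<Rightarrow> nat \<Rightarrow> real.
      inj_on b {..<DIM('a)} \<and> independent (b ` {..<DIM('a)}) \<and> span (b ` {..<DIM('a)}) = UNIV
      \<and> (\<forall>i j k. c i j k \<in> \<rat>)
      \<and> (\<forall>i<DIM('a). \<forall>j<DIM('a). br (b i) (b j) = (\<Sum>k<DIM('a). c i j k *\<^sub>R b k)))"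

section \<open>Complexification g_C = g \<oplus> i g, elements (u,v) standing for u + i v\<close>

definition cmul :: "complex \<Rightarrow> 'a::real_vector \<times> 'a \<Rightarrow> 'a \<times> 'a" where
  "cmul c x = (Re c *\<^sub>R fst x - Im c *\<^sub>R snd x, Re c *\<^sub>R snd x + Im c *\<^sub>R fst x)"

definition cbr :: "('a::real_vector \<Rightarrow> 'a \<Rightarrow> 'a) \<Rightarrow> 'a \<times> 'a \<Rightarrow> 'a \<times> 'a \<Rightarrow> 'a \<times> 'a" where
  "cbr br x y = (br (fst x) (fst y) - br (snd x) (snd y), br (fst x) (snd y) + br (snd x) (fst y))"

definition cJ :: "('a \<Rightarrow> 'a) \<Rightarrow> 'a \<times> 'a \<Rightarrow> 'a \<times> 'a" where
  "cJ J x = (J (fst x), J (snd x))"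

definition g10 :: "('a::real_vector \<Rightarrow> 'a) \<Rightarrow> ('a \<times> 'a) set" where
  "g10 J = {x. cJ J x = cmul \<i> x}"

definition g01 :: "('a::real_vector \<Rightarrow> 'a) \<Rightarrow> ('a \<times> 'a) set" where
  "g01 J = {x. cJ J x = cmul (- \<i>) x}"

definition proj10 :: "('a::real_vector \<Rightarrow> 'a) \<Rightarrow> 'a \<times> 'a \<Rightarrow> 'a \<times> 'a" where
  "proj10 J x = cmul (1/2) (x - cmul \<i> (cJ J x))"

text \<open>Elements of g^{*(0,1)} \<otimes> g^{1,0}: complex-linear maps g^{0,1} \<rightarrow> g^{1,0}
  (only their values on g^{0,1} matter).\<close>
definition form01_10 :: "('a::real_vector \<Rightarrow> 'a) \<Rightarrow> ('a \<times> 'a \<Rightarrow> 'a \<times> 'a) \<Rightarrow> bool" where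
  "form01_10 J \<phi> \<longleftrightarrow> (\<forall>A\<in>g01 J. \<phi> A \<in> g10 J)
     \<and> (\<forall>A\<in>g01 J. \<forall>B\<in>g01 J. \<phi> (A + B) = \<phi> A + \<phi> B)
     \<and> (\<forall>c. \<forall>A\<in>g01 J. \<phi> (cmul c A) = cmul c (\<phi> A))"

text \<open>dbar of mu, as a g^{1,0}-valued (0,2)-form evaluated on (A,B) in g^{0,1}:
  (dbar mu)(A,B) = [A, mu B]^{1,0} - [B, mu A]^{1,0} - mu([A,B]).\<close>
definition dbar :: "('a::real_vector \<Rightarrow> 'a \<Rightarrow> 'a) \<Rightarrow> ('a \<Rightarrow> 'a) \<Rightarrow> ('a \<times> 'a \<Rightarrow> 'a \<times> 'a)
    \<Rightarrow> 'a \<times> 'a \<Rightarrow> 'a \<times> 'a \<Rightarrow> 'a \<times> 'a" where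
  "dbar br J \<mu> A B = proj10 J (cbr br A (\<mu> B)) - proj10 J (cbr br B (\<mu> A)) - \<mu> (cbr br A B)"

definition dbar_closed :: "('a::real_vector \<Rightarrow> 'a \<Rightarrow> 'a) \<Rightarrow> ('a \<Rightarrow> 'a) \<Rightarrow> ('a \<times> 'a \<Rightarrow> 'a \<times> 'a) \<Rightarrow> bool" where
  "dbar_closed br J \<mu> \<longleftrightarrow> (\<forall>A\<in>g01 J. \<forall>B\<in>g01 J. dbar br J \<mu> A B = 0)"

text \<open>mu generates an abelian deformation: Phi(t) = sum_{r>=1} t^r phi_r with phi_1 = mu
  (here phi_r is written \<phi> (r-1)), convergent for small real t, and for small t the
  deformed (0,1)-vectors A + Phi(t) A pairwise commute.\<close>
definition generates_abelian_deformation ::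
  "('a::real_normed_vector \<Rightarrow> 'a \<Rightarrow> 'a) \<Rightarrow> ('a \<Rightarrow> 'a) \<Rightarrow> ('a \<times> 'a \<Rightarrow> 'a \<times> 'a) \<Rightarrow> bool" where
  "generates_abelian_deformation br J \<mu> \<longleftrightarrow>
     (\<exists>\<phi> :: nat \<Rightarrow> ('a \<times> 'a \<Rightarrow> 'a \<times> 'a).
        (\<forall>r. form01_10 J (\<phi> r)) \<and> (\<forall>A\<in>g01 J. \<phi> 0 A = \<mu> A) \<and>
        (\<exists>\<epsilon>>0. \<forall>t::real. \<bar>t\<bar> < \<epsilon> \<longrightarrow>
            (\<forall>A\<in>g01 J. summable (\<lambda>r. t ^ Suc r *\<^sub>R \<phi> r A)) \<and>
            (\<forall>A\<in>g01 J. \<forall>B\<in>g01 J.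
               cbr br (A + (\<Sum>r. t ^ Suc r *\<^sub>R \<phi> r A)) (B + (\<Sum>r. t ^ Suc r *\<^sub>R \<phi> r B)) = 0)))"

text \<open>g is isomorphic to h_{2n+1} \<oplus> R: there is a basis x_1..x_n, y_1..y_n, z, w
  (b 0..b(n-1), b n..b(2n-1), b(2n), b(2n+1)) with [x_i,y_i] = z and all other brackets
  of basis vectors zero (besides [y_i,x_i] = -z).  For n = 0 this is R^2 (h_1 = R).\<close>
definition iso_heis_plus_R :: "('a::real_vector \<Rightarrow> 'a \<Rightarrow> 'a) \<Rightarrow> nat \<Rightarrow> bool" where
  "iso_heis_plus_R br n \<longleftrightarrow> (\<exists>b :: nat \<Rightarrow> 'a.
      inj_on b {..<2*n+2} \<and> independent (b ` {..<2*n+2}) \<and> span (b ` {..<2*n+2}) = UNIV \<and>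
      (\<forall>i<2*n+2. \<forall>j<2*n+2. br (b i) (b j) =
          (if i < n \<and> j = n + i then b (2*n)
           else if j < n \<and> i = n + j then - b (2*n) else 0)))"

end

theory Submission
  imports Defs
begin

text \<open>
  Identify the centre \<open>c\<close> with \<open>\<complex>\<close> by a real-linear coordinate \<open>\<kappa>\<close> turning \<open>J\<close> into
  multiplication by \<open>i\<close>, and let \<open>E a v\<close> be the \<open>W\<close>-component of \<open>[conj A, V]\<close>.
  For \<open>u, v\<close> with \<open>E _ u * E _ v\<close> symmetric, the form \<open>\<mu> = E(_, u) \<otimes> V\<close> is
  \<open>\<partial>\<close>-bar-closed, and the first-order condition \<open>[A, \<mu> B] + [\<mu> A, B] = 0\<close> of an
  abelian deformation gives \<open>cnj (E b u) E v a = cnj (E a u) E v b\<close>.  Starting from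
  \<open>u = v\<close> these identities force all values \<open>\<kappa> [x, y]\<close> to be real multiples of one
  another, so \<open>[g, g]\<close> is a real line \<open>\<real> z\<close> in the two-dimensional centre.  Writing
  \<open>[x, y] = \<omega>(x, y) z\<close>, a Darboux basis of \<open>\<omega>\<close> modulo its radical \<open>c\<close>, followed by
  \<open>z\<close> and a second vector of \<open>c\<close>, is a basis exhibiting \<open>h\<^sub>2\<^sub>n\<^sub>+\<^sub>1 \<oplus> \<real>\<close>.
\<close>

lemma powser_first_coeff_eq_0_real:
  fixes d :: "nat \<Rightarrow> real"
  assumes "\<epsilon> > 0" and "\<And>t. t \<noteq> 0 \<Longrightarrow> \<bar>t\<bar> < \<epsilon> \<Longrightarrow> (\<lambda>r. t ^ Suc r * d r) sums 0"
  shows "d 0 = 0"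
proof -
  have "(\<lambda>r. d r * t ^ r) sums 0" if "t \<noteq> 0" "\<bar>t\<bar> < \<epsilon>" for t
    using sums_mult[OF assms(2)[OF that], of "1 / t"] that by (simp add: ac_simps)
  then have "((\<lambda>_. 0) \<longlongrightarrow> d 0) (at (0::real))"
    by (intro powser_limit_0_strong[OF assms(1)]) auto
  then show ?thesis
    by (simp add: tendsto_const_iff)
qed

lemma powser_first_coeff_eq_0:
  fixes c :: "nat \<Rightarrow> 'a::euclidean_space"
  assumes "\<epsilon> > 0" and "\<And>t. t \<noteq> 0 \<Longrightarrow> \<bar>t\<bar> < \<epsilon> \<Longrightarrow> (\<lambda>r. t ^ Suc r *\<^sub>R c r) sums 0"
  shows "c 0 = 0"
proof (rule euclidean_eqI)
  fix b :: 'a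
  have "(\<lambda>r. t ^ Suc r * (c r \<bullet> b)) sums 0" if "t \<noteq> 0" "\<bar>t\<bar> < \<epsilon>" for t
    using bounded_linear.sums[OF bounded_linear_inner_left assms(2)[OF that], of b] by simp
  then show "c 0 \<bullet> b = 0 \<bullet> b"
    using powser_first_coeff_eq_0_real[OF assms(1), of "\<lambda>r. c r \<bullet> b"] by simp
qed

lemma inj_on_independent_if_scalars_zero:
  fixes b :: "'i \<Rightarrow> 'a::real_vector"
  assumes "finite I" and scalars: "\<And>c. (\<Sum>i\<in>I. c i *\<^sub>R b i) = 0 \<Longrightarrow> \<forall>i\<in>I. c i = 0"
  shows "inj_on b I \<and> independent (b ` I)"
proof
  show inj: "inj_on b I"
  proof (rule inj_onI, rule ccontr)
    fix i j assume ij: "i \<in> I" "j \<in> I" "b i = b j" "i \<noteq> j"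
    define c where "c k = (if k = i then 1 else if k = j then -1 else (0::real))" for k
    have "(\<Sum>k\<in>I. c k *\<^sub>R b k) = (\<Sum>k\<in>I. (if k = i then b i else 0) - (if k = j then b j else 0))"
      by (rule sum.cong) (use ij in \<open>auto simp: c_def\<close>)
    also have "\<dots> = 0"
      using ij assms(1) by (simp add: sum_subtractf sum.delta)
    finally show False
      using scalars ij by (force simp: c_def)
  qed
  show "independent (b ` I)"
  proof (rule independent_if_scalars_zero)
    fix g x assume g: "(\<Sum>x\<in>b ` I. g x *\<^sub>R x) = 0" and x: "x \<in> b ` I"
    have "(\<Sum>i\<in>I. g (b i) *\<^sub>R b i) = 0"
      using g by (simp add: sum.reindex[OF inj])
    then show "g x = 0"
      using scalars x by fastforce
  qed (use assms(1) in simp)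
qed

section \<open>Symplectic bases\<close>

definition radical_on :: "('a \<Rightarrow> 'a \<Rightarrow> real) \<Rightarrow> 'a set \<Rightarrow> 'a set" where
  "radical_on \<omega> V = {x\<in>V. \<forall>y\<in>V. \<omega> x y = 0}"

definition symplectic_pairs :: "('a \<Rightarrow> 'a \<Rightarrow> real) \<Rightarrow> nat \<Rightarrow> (nat \<Rightarrow> 'a) \<Rightarrow> (nat \<Rightarrow> 'a) \<Rightarrow> bool" where
  "symplectic_pairs \<omega> n e f \<longleftrightarrow> (\<forall>i<n. \<forall>j<n.
     \<omega> (e i) (e j) = 0 \<and> \<omega> (f i) (f j) = 0 \<and> \<omega> (e i) (f j) = (if i = j then 1 else 0))"

lemma symplectic_pairs_extend:
  assumes skew: "\<And>x y. \<omega> x y = - \<omega> y x" and "symplectic_pairs \<omega> n e f" and "\<omega> x y = 1"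
    and "\<And>k. k < n \<Longrightarrow> \<omega> x (e k) = 0 \<and> \<omega> y (e k) = 0 \<and> \<omega> x (f k) = 0 \<and> \<omega> y (f k) = 0"
  shows "symplectic_pairs \<omega> (Suc n) (e(n := x)) (f(n := y))"
proof -
  have "\<omega> u u = 0" for u
    using skew[of u u] by simp
  moreover have "\<omega> (e k) x = 0 \<and> \<omega> (e k) y = 0 \<and> \<omega> (f k) x = 0 \<and> \<omega> (f k) y = 0" if "k < n" for k
    using assms(4)[OF that] skew[of "e k"] skew[of "f k"] by simp
  ultimately show ?thesis
    using assms(2-4) by (auto simp: symplectic_pairs_def less_Suc_eq)
qed

lemma symplectic_complement:
  fixes \<omega> :: "'a::euclidean_space \<Rightarrow> 'a \<Rightarrow> real"
  assumes bil: "bilinear \<omega>" and skew: "\<And>x y. \<omega> x y = - \<omega> y x" and V: "subspace V"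
    and "x \<in> V" "y \<in> V" "\<omega> x y = 1"
  defines "V' \<equiv> {u\<in>V. \<omega> x u = 0 \<and> \<omega> y u = 0}"
  shows "subspace V'" and "dim V' < dim V"
    and "\<And>w. w \<in> V \<Longrightarrow> w - \<omega> x w *\<^sub>R y + \<omega> y w *\<^sub>R x \<in> V'"
    and "radical_on \<omega> V' \<subseteq> radical_on \<omega> V"
proof -
  note bilin = bilinear_radd[OF bil] bilinear_rsub[OF bil] bilinear_rmul[OF bil] bilinear_rzero[OF bil]
  have self: "\<omega> u u = 0" for u
    using skew[of u u] by simp
  have yx: "\<omega> y x = -1"
    using skew[of y x] \<open>\<omega> x y = 1\<close> by simp
  show "subspace V'"
    using V by (auto simp: V'_def subspace_def bilin)
  show proj: "w - \<omega> x w *\<^sub>R y + \<omega> y w *\<^sub>R x \<in> V'" if "w \<in> V" for w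
    using that \<open>x \<in> V\<close> \<open>y \<in> V\<close> V \<open>\<omega> x y = 1\<close> yx
    by (simp add: V'_def subspace_add subspace_diff subspace_scale bilin self)
  show "dim V' < dim V"
  proof (rule dim_psubset)
    have "x \<notin> V'"
      using yx by (simp add: V'_def)
    then have "V' \<subset> V"
      using \<open>x \<in> V\<close> by (auto simp: V'_def)
    then show "span V' \<subset> span V"
      using \<open>subspace V'\<close> V by (simp add: span_eq_iff[THEN iffD2])
  qed
  show "radical_on \<omega> V' \<subseteq> radical_on \<omega> V"
  proof
    fix u assume "u \<in> radical_on \<omega> V'"
    then have u: "u \<in> V'" "\<And>w. w \<in> V' \<Longrightarrow> \<omega> u w = 0"
      by (auto simp: radical_on_def)
    have "\<omega> u x = 0" "\<omega> u y = 0"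
      using u(1) skew[of u x] skew[of u y] by (auto simp: V'_def)
    moreover have "\<omega> u (w - \<omega> x w *\<^sub>R y + \<omega> y w *\<^sub>R x) = 0" if "w \<in> V" for w
      using u(2) proj[OF that] by blast
    ultimately have "\<omega> u w = 0" if "w \<in> V" for w
      using that by (simp add: bilin)
    then show "u \<in> radical_on \<omega> V"
      using u(1) by (simp add: radical_on_def V'_def)
  qed
qed

lemma symplectic_basis_mod_radical:
  fixes \<omega> :: "'a::euclidean_space \<Rightarrow> 'a \<Rightarrow> real"
  assumes bil: "bilinear \<omega>" and skew: "\<And>x y. \<omega> x y = - \<omega> y x" and "subspace V"
  shows "\<exists>n e f. symplectic_pairs \<omega> n e f \<and> e ` {..<n} \<subseteq> V \<and> f ` {..<n} \<subseteq> V \<and>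
           V \<subseteq> span (e ` {..<n} \<union> f ` {..<n} \<union> radical_on \<omega> V)"
  using assms(3)
proof (induction "dim V" arbitrary: V rule: less_induct)
  case less
  show ?case
  proof (cases "radical_on \<omega> V = V")
    case True
    then show ?thesis
      by (intro exI[of _ 0]) (auto simp: symplectic_pairs_def span_superset)
  next
    case False
    then obtain x y0 where x: "x \<in> V" and y0: "y0 \<in> V" and "\<omega> x y0 \<noteq> 0"
      by (auto simp: radical_on_def)
    define y where "y = (1 / \<omega> x y0) *\<^sub>R y0"
    have y: "y \<in> V" and xy: "\<omega> x y = 1"
      using y0 less.prems \<open>\<omega> x y0 \<noteq> 0\<close> by (simp_all add: y_def subspace_scale bilinear_rmul[OF bil])
    define V' where "V' = {u\<in>V. \<omega> x u = 0 \<and> \<omega> y u = 0}"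
    note compl = symplectic_complement[OF bil skew less.prems x y xy, folded V'_def]
    obtain n e f where efV': "e ` {..<n} \<subseteq> V'" "f ` {..<n} \<subseteq> V'"
      and sympl: "symplectic_pairs \<omega> n e f"
      and span': "V' \<subseteq> span (e ` {..<n} \<union> f ` {..<n} \<union> radical_on \<omega> V')"
      using less.hyps[OF compl(2,1)] by blast
    define S where "S = e(n := x) ` {..<Suc n} \<union> f(n := y) ` {..<Suc n} \<union> radical_on \<omega> V"
    have "e ` {..<n} \<union> f ` {..<n} \<union> radical_on \<omega> V' \<subseteq> S"
      using compl(4) by (force simp: S_def)
    then have "V' \<subseteq> span S"
      using span' span_mono by blast
    moreover have "x \<in> span S" "y \<in> span S"
      by (auto simp: S_def intro!: span_base)
    ultimately have "V \<subseteq> span S"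
    proof (intro subsetI)
      fix w assume "w \<in> V"
      define p where "p = w - \<omega> x w *\<^sub>R y + \<omega> y w *\<^sub>R x"
      have "p \<in> span S"
        using compl(3)[OF \<open>w \<in> V\<close>] \<open>V' \<subseteq> span S\<close> by (auto simp: p_def)
      then have "p + \<omega> x w *\<^sub>R y - \<omega> y w *\<^sub>R x \<in> span S"
        using \<open>x \<in> span S\<close> \<open>y \<in> span S\<close> by (intro span_diff span_add span_scale)
      then show "w \<in> span S"
        by (simp add: p_def)
    qed
    moreover have "symplectic_pairs \<omega> (Suc n) (e(n := x)) (f(n := y))"
      using efV' by (intro symplectic_pairs_extend[OF skew sympl xy]) (auto simp: V'_def)
    moreover have "e(n := x) ` {..<Suc n} \<subseteq> V" "f(n := y) ` {..<Suc n} \<subseteq> V"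
      using efV' x y by (auto simp: V'_def lessThan_Suc)
    ultimately show ?thesis
      unfolding S_def by blast
  qed
qed

definition darboux_family :: "nat \<Rightarrow> (nat \<Rightarrow> 'a) \<Rightarrow> (nat \<Rightarrow> 'a) \<Rightarrow> 'a \<Rightarrow> 'a \<Rightarrow> nat \<Rightarrow> 'a" where
  "darboux_family n e f z w i =
     (if i < n then e i else if i < 2 * n then f (i - n) else if i = 2 * n then z else w)"

lemma darboux_family_pairing:
  fixes \<omega> :: "'a \<Rightarrow> 'a \<Rightarrow> real"
  assumes skew: "\<And>x y. \<omega> x y = - \<omega> y x" and sympl: "symplectic_pairs \<omega> n e f"
    and radical: "\<And>y. \<omega> z y = 0" "\<And>y. \<omega> w y = 0" and "i < 2*n+2" "j < 2*n+2"
  shows "\<omega> (darboux_family n e f z w i) (darboux_family n e f z w j) =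
    (if i < n \<and> j = n + i then 1 else if j < n \<and> i = n + j then -1 else 0)"
proof -
  consider "2*n \<le> i" | "2*n \<le> j" | "i < n" "j < n" | "i < n" "n \<le> j" "j < 2*n"
    | "n \<le> i" "i < 2*n" "j < n" | "n \<le> i" "i < 2*n" "n \<le> j" "j < 2*n"
    by linarith
  then show ?thesis
  proof cases
    case 2
    let ?b = "darboux_family n e f z w"
    have "\<omega> (?b j) (?b i) = 0"
      using 2 radical by (simp add: darboux_family_def)
    then show ?thesis
      using 2 skew[of "?b i" "?b j"] by auto
  next
    case 5
    then show ?thesis
      using sympl skew[of "f (i - n)" "e j"]
      by (auto simp: darboux_family_def symplectic_pairs_def)
  qed (use \<open>i < 2*n+2\<close> \<open>j < 2*n+2\<close> sympl radical in
      \<open>auto simp: darboux_family_def symplectic_pairs_def\<close>)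
qed

lemma darboux_family_coeffs_eq_0:
  fixes \<omega> :: "'a::real_vector \<Rightarrow> 'a \<Rightarrow> real"
  assumes bil: "bilinear \<omega>" and skew: "\<And>x y. \<omega> x y = - \<omega> y x"
    and sympl: "symplectic_pairs \<omega> n e f" and radical: "\<And>y. \<omega> z y = 0" "\<And>y. \<omega> w y = 0"
    and sum0: "(\<Sum>i<2*n+2. c i *\<^sub>R darboux_family n e f z w i) = 0" and "k < n"
  shows "c k = 0 \<and> c (n + k) = 0"
proof -
  define b where "b = darboux_family n e f z w"
  have eval: "(\<Sum>i<2*n+2. c i * \<omega> (b i) y) = 0" for y
  proof -
    have lin: "linear (\<lambda>x. \<omega> x y)"
      using bil by (simp add: bilinear_def)
    have "\<omega> (\<Sum>i<2*n+2. c i *\<^sub>R b i) y = (\<Sum>i<2*n+2. c i * \<omega> (b i) y)"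
      using linear_sum[OF lin, of "\<lambda>i. c i *\<^sub>R b i" "{..<2*n+2}"] linear_scale[OF lin] by simp
    then show ?thesis
      using sum0 bilinear_lzero[OF bil] by (simp add: b_def)
  qed
  have "f k = b (n + k)" "e k = b k"
    using \<open>k < n\<close> by (simp_all add: b_def darboux_family_def)
  then have \<omega>_f: "\<omega> (b i) (f k) = (if i = k then 1 else 0)"
    and \<omega>_e: "\<omega> (b i) (e k) = (if i = n + k then -1 else 0)" if "i < 2*n+2" for i
    using darboux_family_pairing[OF skew sympl radical that, of "n + k"]
      darboux_family_pairing[OF skew sympl radical that, of k] \<open>k < n\<close>
    by (auto simp: b_def)
  have "0 = (\<Sum>i<2*n+2. c i * \<omega> (b i) (f k))"
    using eval by simp
  also have "\<dots> = (\<Sum>i<2*n+2. if i = k then c i else 0)"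
    using \<omega>_f by (intro sum.cong) auto
  also have "\<dots> = c k"
    using \<open>k < n\<close> by (subst sum.delta) auto
  finally have "c k = 0" ..
  have "0 = (\<Sum>i<2*n+2. c i * \<omega> (b i) (e k))"
    using eval by simp
  also have "\<dots> = (\<Sum>i<2*n+2. if i = n + k then - c i else 0)"
    using \<omega>_e by (intro sum.cong) auto
  also have "\<dots> = - c (n + k)"
    using \<open>k < n\<close> by (subst sum.delta) auto
  finally show ?thesis
    using \<open>c k = 0\<close> by simp
qed

lemma scaleR_add_eq_0_imp_coeffs_eq_0:
  assumes "z \<noteq> 0" and "w \<notin> span {z}" and "p *\<^sub>R z + q *\<^sub>R w = 0"
  shows "p = 0 \<and> q = 0"
proof -
  have "q = 0"
  proof (rule ccontr)
    assume "q \<noteq> 0"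
    then have "w = (1 / q) *\<^sub>R (q *\<^sub>R w)"
      by simp
    also have "q *\<^sub>R w = (- p) *\<^sub>R z"
      using assms(3) by (simp add: eq_neg_iff_add_eq_0 add.commute)
    finally have "w = (1 / q) *\<^sub>R ((- p) *\<^sub>R z)" .
    moreover have "(1 / q) *\<^sub>R ((- p) *\<^sub>R z) \<in> span {z}"
      by (intro span_scale span_base) simp
    ultimately show False
      using assms(2) by simp
  qed
  then show ?thesis
    using assms(1,3) by simp
qed

lemma darboux_family_independent:
  fixes \<omega> :: "'a::real_vector \<Rightarrow> 'a \<Rightarrow> real"
  assumes bil: "bilinear \<omega>" and skew: "\<And>x y. \<omega> x y = - \<omega> y x"
    and sympl: "symplectic_pairs \<omega> n e f"
    and radical: "\<And>y. \<omega> z y = 0" "\<And>y. \<omega> w y = 0" and "z \<noteq> 0" "w \<notin> span {z}"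
  shows "inj_on (darboux_family n e f z w) {..<2*n+2} \<and>
    independent (darboux_family n e f z w ` {..<2*n+2})"
proof (rule inj_on_independent_if_scalars_zero)
  fix c assume sum0: "(\<Sum>i\<in>{..<2*n+2}. c i *\<^sub>R darboux_family n e f z w i) = 0"
  note pairs = darboux_family_coeffs_eq_0[OF bil skew sympl radical sum0]
  have low: "c i = 0" if "i < 2*n" for i
  proof (cases "i < n")
    case False
    then show ?thesis
      using pairs[of "i - n"] that by simp
  qed (use pairs in auto)
  then have "c (2*n) *\<^sub>R z + c (2*n+1) *\<^sub>R w = 0"
    using sum0 by (simp add: numeral_2_eq_2 darboux_family_def)
  then have "c (2*n) = 0 \<and> c (2*n+1) = 0"
    using scaleR_add_eq_0_imp_coeffs_eq_0 \<open>z \<noteq> 0\<close> \<open>w \<notin> span {z}\<close> by blast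
  then show "\<forall>i\<in>{..<2*n+2}. c i = 0"
    using low by (auto simp: less_Suc_eq)
qed simp

lemma darboux_family_span:
  assumes "V \<subseteq> span (e ` {..<n} \<union> f ` {..<n} \<union> R)" and "R \<subseteq> span {w, z}"
  shows "V \<subseteq> span (darboux_family n e f z w ` {..<2*n+2})"
proof -
  let ?B = "darboux_family n e f z w ` {..<2*n+2}"
  have "e ` {..<n} \<union> f ` {..<n} \<union> {w, z} \<subseteq> ?B"
  proof safe
    fix i assume "i < n"
    show "e i \<in> ?B"
      using \<open>i < n\<close> by (intro image_eqI[of _ _ i]) (auto simp: darboux_family_def)
    show "f i \<in> ?B"
      using \<open>i < n\<close> by (intro image_eqI[of _ _ "n + i"]) (auto simp: darboux_family_def)
  next
    show "w \<in> ?B"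
      by (intro image_eqI[of _ _ "2*n+1"]) (auto simp: darboux_family_def)
    show "z \<in> ?B"
      by (intro image_eqI[of _ _ "2*n"]) (auto simp: darboux_family_def)
  qed
  moreover from this have "span {w, z} \<subseteq> span ?B"
    by (intro span_mono) blast
  ultimately have "e ` {..<n} \<union> f ` {..<n} \<union> R \<subseteq> span ?B"
    using assms(2) span_superset[of ?B] by blast
  then show ?thesis
    using assms(1) span_minimal[OF _ subspace_span] by blast
qed

section \<open>Rank-one brackets\<close>

lemma dim_eq_2_extend_basis:
  fixes C :: "'a::euclidean_space set"
  assumes "dim C = 2" and "z \<in> C" "z \<noteq> 0"
  obtains w where "w \<in> C" "w \<notin> span {z}" "C \<subseteq> span {w, z}"
proof -
  have "\<not> C \<subseteq> span {z}"
    using assms(1) dim_le_card[of C "{z}"] by auto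
  then obtain w where w: "w \<in> C" "w \<notin> span {z}"
    by blast
  moreover have "w \<noteq> z"
    using w(2) span_base[of z "{z}"] by auto
  then have "C \<subseteq> span {w, z}"
    using w assms by (intro card_ge_dim_independent) (auto simp: independent_insert)
  ultimately show ?thesis
    using that by blast
qed

lemma bracket_rank_one_form:
  fixes br :: "'a::real_inner \<Rightarrow> 'a \<Rightarrow> 'a"
  assumes bil: "bilinear br" and skew: "\<And>x y. br x y = - br y x"
    and "z \<noteq> 0" and rank_one: "\<And>x y. br x y \<in> span {z}"
  obtains \<omega> where "bilinear \<omega>" "\<And>x y. \<omega> x y = - \<omega> y x" "\<And>x y. br x y = \<omega> x y *\<^sub>R z"
proof
  define \<omega> where "\<omega> x y = (br x y \<bullet> z) / (z \<bullet> z)" for x y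
  show "bilinear \<omega>"
    unfolding bilinear_def linear_iff \<omega>_def
    by (simp add: bilinear_ladd[OF bil] bilinear_radd[OF bil] bilinear_lmul[OF bil]
        bilinear_rmul[OF bil] inner_add_left add_divide_distrib)
  show "\<omega> x y = - \<omega> y x" for x y
    using skew[of x y] by (simp add: \<omega>_def)
  show "br x y = \<omega> x y *\<^sub>R z" for x y
    using rank_one[of x y] \<open>z \<noteq> 0\<close> by (auto simp: span_singleton \<omega>_def)
qed

lemma iso_heis_plus_R_if_bracket_rank_one:
  fixes br :: "'a::euclidean_space \<Rightarrow> 'a \<Rightarrow> 'a"
  assumes bil: "bilinear br" and skew: "\<And>x y. br x y = - br y x"
    and z: "z \<in> lie_center br" "z \<noteq> 0" and rank_one: "\<And>x y. br x y \<in> span {z}"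
    and dim_center: "dim (lie_center br) = 2"
  shows "\<exists>n. DIM('a) = 2*n+2 \<and> iso_heis_plus_R br n"
proof -
  obtain \<omega> where bil_\<omega>: "bilinear \<omega>" and skew_\<omega>: "\<And>x y. \<omega> x y = - \<omega> y x"
    and br_\<omega>: "\<And>x y. br x y = \<omega> x y *\<^sub>R z"
    using bracket_rank_one_form[OF bil skew z(2) rank_one] by blast
  have radical: "radical_on \<omega> UNIV = lie_center br"
    using \<open>z \<noteq> 0\<close> by (auto simp: radical_on_def lie_center_def br_\<omega>)
  then have \<omega>_center: "\<omega> x y = 0" if "x \<in> lie_center br" for x y
    using that by (auto simp: radical_on_def)
  obtain n e f where sympl: "symplectic_pairs \<omega> n e f"
    and span_UNIV: "UNIV \<subseteq> span (e ` {..<n} \<union> f ` {..<n} \<union> lie_center br)"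
    using symplectic_basis_mod_radical[OF bil_\<omega> skew_\<omega> subspace_UNIV] unfolding radical by blast
  obtain w where w: "w \<in> lie_center br" "w \<notin> span {z}" and "lie_center br \<subseteq> span {w, z}"
    using dim_eq_2_extend_basis[OF dim_center z] by blast
  define b where "b = darboux_family n e f z w"
  have indep: "inj_on b {..<2*n+2} \<and> independent (b ` {..<2*n+2})"
    unfolding b_def
    by (rule darboux_family_independent[OF bil_\<omega> skew_\<omega> sympl \<omega>_center[OF z(1)] \<omega>_center[OF w(1)]
          z(2) w(2)])
  have span: "span (b ` {..<2*n+2}) = UNIV"
    using darboux_family_span[OF span_UNIV \<open>lie_center br \<subseteq> span {w, z}\<close>] by (auto simp: b_def)
  have "DIM('a) = 2*n+2"
    using basis_card_eq_dim[of "b ` {..<2*n+2}" UNIV] indep span card_image[of b "{..<2*n+2}"]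
    by simp
  moreover have "br (b i) (b j) =
      (if i < n \<and> j = n + i then b (2*n) else if j < n \<and> i = n + j then - b (2*n) else 0)"
    if "i < 2*n+2" "j < 2*n+2" for i j
  proof -
    have "b (2*n) = z"
      by (simp add: b_def darboux_family_def)
    moreover have "\<omega> (b i) (b j) = (if i < n \<and> j = n + i then 1 else if j < n \<and> i = n + j then -1 else 0)"
      unfolding b_def
      by (rule darboux_family_pairing[OF skew_\<omega> sympl \<omega>_center[OF z(1)] \<omega>_center[OF w(1)] that])
    ultimately show ?thesis
      by (simp add: br_\<omega>)
  qed
  ultimately show ?thesis
    unfolding iso_heis_plus_R_def using indep span by blast
qed

section \<open>Abelian complex structures and the first-order obstruction\<close>

lemma complex_structure_no_real_eigenvector:
  assumes linJ: "linear J" and JJ: "\<And>x. J (J x) = - x" and "z \<noteq> 0"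
  shows "J z \<notin> span {z}"
proof
  assume "J z \<in> span {z}"
  then obtain t where "J z = t *\<^sub>R z"
    by (auto simp: span_singleton)
  then have "(t * t) *\<^sub>R z = - z"
    using JJ[of z] by (simp add: linear_scale[OF linJ])
  then have "(1 + t * t) *\<^sub>R z = 0"
    by (simp add: scaleR_add_left)
  moreover have "1 + t * t > 0"
    by (simp add: add_pos_nonneg)
  ultimately show False
    using \<open>z \<noteq> 0\<close> by simp
qed

lemma complex_coordinate_exists:
  fixes J :: "'a::euclidean_space \<Rightarrow> 'a"
  assumes linJ: "linear J" and JJ: "\<And>x. J (J x) = - x"
    and C: "\<And>x. x \<in> C \<Longrightarrow> J x \<in> C" and dimC: "dim C = 2"
  shows "\<exists>\<kappa> :: 'a \<Rightarrow> complex. linear \<kappa> \<and> (\<forall>x. \<kappa> (J x) = \<i> * \<kappa> x) \<and> (\<forall>x\<in>C. \<kappa> x = 0 \<longrightarrow> x = 0)"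
proof -
  note J_simps = linear_add[OF linJ] linear_scale[OF linJ] linear_neg[OF linJ]
  obtain z where z: "z \<in> C" "z \<noteq> 0"
    using dimC dim_eq_0[of C] by fastforce
  have "J z \<notin> span {z}"
    using complex_structure_no_real_eigenvector[OF linJ JJ z(2)] .
  then have indep: "independent {J z, z}" and "J z \<noteq> z"
    using z by (auto simp: independent_insert span_base)
  have C_span: "C \<subseteq> span {J z, z}"
    using z C \<open>J z \<noteq> z\<close> dimC by (intro card_ge_dim_independent[OF _ indep]) auto
  obtain \<xi> :: "'a \<Rightarrow> real" where \<xi>: "linear \<xi>" "\<xi> z = 1" "\<xi> (J z) = 0"
    using linear_independent_extend[OF indep, of "\<lambda>x. if x = z then 1 else 0"] \<open>J z \<noteq> z\<close> by auto
  note \<xi>_simps = linear_add[OF \<xi>(1)] linear_diff[OF \<xi>(1)] linear_scale[OF \<xi>(1)] linear_neg[OF \<xi>(1)]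
  define \<kappa> where "\<kappa> x = Complex (\<xi> x) (- \<xi> (J x))" for x
  have "linear \<kappa>"
    by (simp add: linear_iff \<kappa>_def complex_eq_iff J_simps \<xi>_simps)
  moreover have "\<kappa> (J x) = \<i> * \<kappa> x" for x
    by (simp add: \<kappa>_def complex_eq_iff JJ \<xi>_simps)
  moreover have "x = 0" if "x \<in> C" "\<kappa> x = 0" for x
  proof -
    obtain p q where x: "x = p *\<^sub>R J z + q *\<^sub>R z"
      using C_span \<open>x \<in> C\<close> by (auto simp: span_insert span_singleton algebra_simps)
    have "\<xi> x = q" "\<xi> (J x) = - p"
      by (simp_all add: x J_simps \<xi>_simps \<xi> JJ)
    then show "x = 0"
      using \<open>\<kappa> x = 0\<close> by (simp add: \<kappa>_def complex_eq_iff x)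
  qed
  ultimately show ?thesis
    by blast
qed

lemma subspace_lie_center: "bilinear br \<Longrightarrow> subspace (lie_center br)"
  by (auto simp: subspace_def lie_center_def bilinear_ladd bilinear_lmul bilinear_lzero)

locale abelian_complex =
  fixes br :: "'a::euclidean_space \<Rightarrow> 'a \<Rightarrow> 'a" and J :: "'a \<Rightarrow> 'a"
  assumes bil: "bilinear br" and skew: "\<And>x y. br x y = - br y x"
    and linJ: "linear J" and JJ[simp]: "\<And>a. J (J a) = - a"
    and brJJ: "\<And>a b. br (J a) (J b) = br a b"
begin

lemmas br_simps[simp] = bilinear_ladd[OF bil] bilinear_radd[OF bil] bilinear_lmul[OF bil]
  bilinear_rmul[OF bil] bilinear_lneg[OF bil] bilinear_rneg[OF bil] bilinear_lzero[OF bil]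
  bilinear_rzero[OF bil] bilinear_lsub[OF bil] bilinear_rsub[OF bil]

lemmas J_simps[simp] = linear_add[OF linJ] linear_scale[OF linJ] linear_neg[OF linJ]
  linear_diff[OF linJ] linear_0[OF linJ]

lemma br_J_left[simp]: "br (J a) b = - br a (J b)"
  using brJJ[of "J a" b] by simp

lemma g01_iff: "A \<in> g01 J \<longleftrightarrow> snd A = J (fst A)"
  by (cases A) (auto simp: g01_def cJ_def cmul_def)

lemma g10_iff: "A \<in> g10 J \<longleftrightarrow> snd A = - J (fst A)"
  by (cases A) (auto simp: g10_def cJ_def cmul_def)

lemma cbr_g01: "A \<in> g01 J \<Longrightarrow> B \<in> g01 J \<Longrightarrow> cbr br A B = 0"
  by (cases A; cases B) (auto simp: g01_iff cbr_def zero_prod_def)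

lemma cbr_g10: "A \<in> g10 J \<Longrightarrow> B \<in> g10 J \<Longrightarrow> cbr br A B = 0"
  by (cases A; cases B) (auto simp: g10_iff cbr_def zero_prod_def)

lemma subspace_g10: "subspace (g10 J)"
  by (auto simp: subspace_def g10_iff algebra_simps)

lemma linear_cbr_right: "linear (cbr br A)"
  unfolding linear_iff cbr_def by (auto simp: algebra_simps)

lemma linear_cbr_left: "linear (\<lambda>X. cbr br X B)"
  unfolding linear_iff cbr_def by (auto simp: algebra_simps)

lemma cbr_add: "cbr br (A + P) (B + Q) = cbr br A B + cbr br A Q + cbr br P B + cbr br P Q"
  unfolding cbr_def by (auto simp: algebra_simps)

lemma suminf_form01_10_in_g10:
  assumes "\<And>r. form01_10 J (\<phi> r)" and "X \<in> g01 J" and "summable (\<lambda>r. t ^ Suc r *\<^sub>R \<phi> r X)"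
  shows "(\<Sum>r. t ^ Suc r *\<^sub>R \<phi> r X) \<in> g10 J"
proof (rule closed_sequentially[OF closed_subspace[OF subspace_g10]])
  show "(\<lambda>n. \<Sum>r<n. t ^ Suc r *\<^sub>R \<phi> r X) \<longlonglongrightarrow> (\<Sum>r. t ^ Suc r *\<^sub>R \<phi> r X)"
    using assms(3) by (simp add: summable_LIMSEQ)
  show "(\<Sum>r<n. t ^ Suc r *\<^sub>R \<phi> r X) \<in> g10 J" for n
    using assms(1,2) unfolding form01_10_def
    by (intro subspace_sum[OF subspace_g10] subspace_scale[OF subspace_g10]) blast
qed

lemma abelian_deformation_first_order:
  assumes "generates_abelian_deformation br J \<mu>" and A: "A \<in> g01 J" and B: "B \<in> g01 J"
  shows "cbr br A (\<mu> B) + cbr br (\<mu> A) B = 0"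
proof -
  obtain \<phi> \<epsilon> where form: "\<And>r. form01_10 J (\<phi> r)" and \<phi>0: "\<forall>X\<in>g01 J. \<phi> 0 X = \<mu> X"
    and "\<epsilon> > 0" and deform: "\<And>t. \<bar>t\<bar> < \<epsilon> \<Longrightarrow>
      (\<forall>X\<in>g01 J. summable (\<lambda>r. t ^ Suc r *\<^sub>R \<phi> r X)) \<and>
      cbr br (A + (\<Sum>r. t ^ Suc r *\<^sub>R \<phi> r A)) (B + (\<Sum>r. t ^ Suc r *\<^sub>R \<phi> r B)) = 0"
    using assms unfolding generates_abelian_deformation_def by meson
  define c where "c r = cbr br A (\<phi> r B) + cbr br (\<phi> r A) B" for r
  have "c 0 = 0"
  proof (rule powser_first_coeff_eq_0[OF \<open>\<epsilon> > 0\<close>])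
    fix t :: real assume "t \<noteq> 0" "\<bar>t\<bar> < \<epsilon>"
    then have sA: "(\<lambda>r. t ^ Suc r *\<^sub>R \<phi> r A) sums (\<Sum>r. t ^ Suc r *\<^sub>R \<phi> r A)"
      and sB: "(\<lambda>r. t ^ Suc r *\<^sub>R \<phi> r B) sums (\<Sum>r. t ^ Suc r *\<^sub>R \<phi> r B)"
      using deform A B by (auto simp: summable_sums)
    have "(\<lambda>r. cbr br A (t ^ Suc r *\<^sub>R \<phi> r B) + cbr br (t ^ Suc r *\<^sub>R \<phi> r A) B) sums
        (cbr br A (\<Sum>r. t ^ Suc r *\<^sub>R \<phi> r B) + cbr br (\<Sum>r. t ^ Suc r *\<^sub>R \<phi> r A) B)"
      using linear_cbr_right linear_cbr_left
      by (intro sums_add bounded_linear.sums[OF _ sB] bounded_linear.sums[OF _ sA])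
        (auto simp: linear_conv_bounded_linear)
    moreover have "cbr br A (\<Sum>r. t ^ Suc r *\<^sub>R \<phi> r B) + cbr br (\<Sum>r. t ^ Suc r *\<^sub>R \<phi> r A) B = 0"
      \<comment> \<open>\<open>J\<close> abelian: \<open>[A, B]\<close> and the quadratic term in \<open>\<Phi>\<close> lie in \<open>[g\<^sup>0\<^sup>1, g\<^sup>0\<^sup>1]\<close> and
        \<open>[g\<^sup>1\<^sup>0, g\<^sup>1\<^sup>0]\<close>, which vanish\<close>
      using deform[OF \<open>\<bar>t\<bar> < \<epsilon>\<close>] cbr_g01[OF A B]
        cbr_g10[OF suminf_form01_10_in_g10[OF form A] suminf_form01_10_in_g10[OF form B]]
        sums_summable[OF sA] sums_summable[OF sB]
      by (simp add: cbr_add)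
    ultimately show "(\<lambda>r. t ^ Suc r *\<^sub>R c r) sums 0"
      by (simp add: c_def linear_scale[OF linear_cbr_right] linear_scale[OF linear_cbr_left]
          scaleR_add_right)
  qed
  then show ?thesis
    using \<phi>0 A B by (simp add: c_def)
qed

definition mu_of :: "('a \<Rightarrow> 'a) \<Rightarrow> 'a \<times> 'a \<Rightarrow> 'a \<times> 'a" where
  "mu_of m A = (m (fst A), - J (m (fst A)))"

lemma form01_10_mu_of:
  assumes lm: "linear m" and anti: "\<And>x. m (J x) = - J (m x)"
  shows "form01_10 J (mu_of m)"
  unfolding form01_10_def
proof (intro conjI ballI allI)
  fix A assume "A \<in> g01 J"
  then show "mu_of m A \<in> g10 J"
    by (simp add: g10_iff mu_of_def)
next
  fix A B show "mu_of m (A + B) = mu_of m A + mu_of m B"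
    by (simp add: mu_of_def linear_add[OF lm])
next
  fix c A assume "A \<in> g01 J"
  then show "mu_of m (cmul c A) = cmul c (mu_of m A)"
    by (simp add: g01_iff mu_of_def cmul_def linear_add[OF lm] linear_diff[OF lm]
        linear_scale[OF lm] anti algebra_simps)
qed

lemma dbar_closed_mu_of:
  assumes lm: "linear m"
    and closed: "\<And>a b. br a (J (m b)) - br b (J (m a)) = - J (br a (m b) - br b (m a))"
  shows "dbar_closed br J (mu_of m)"
  unfolding dbar_closed_def
proof (intro ballI)
  fix A B assume "A \<in> g01 J" "B \<in> g01 J"
  then obtain a b where A: "A = (a, J a)" and B: "B = (b, J b)"
    by (metis g01_iff prod.collapse)
  define P where "P = br a (m b) - br b (m a)"
  define Q where "Q = br a (J (m b)) - br b (J (m a))"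
  have "mu_of m (cbr br A B) = 0"
    using cbr_g01[OF \<open>A \<in> g01 J\<close> \<open>B \<in> g01 J\<close>]
    by (simp add: mu_of_def linear_0[OF lm] zero_prod_def)
  then have "dbar br J (mu_of m) A B = (P - J Q, - Q - J P)"
    by (simp add: dbar_def A B P_def Q_def cbr_def mu_of_def proj10_def cmul_def cJ_def
        scaleR_2[symmetric] algebra_simps)
  then show "dbar br J (mu_of m) A B = 0"
    using closed[of a b] by (simp add: P_def Q_def zero_prod_def)
qed

lemma mu_of_first_order:
  assumes "generates_abelian_deformation br J (mu_of m)"
  shows "br a (m b) = br b (m a)"
proof -
  have "cbr br (a, J a) (mu_of m (b, J b)) + cbr br (mu_of m (a, J a)) (b, J b) = 0"
    using abelian_deformation_first_order[OF assms] by (simp add: g01_iff)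
  then have "2 *\<^sub>R (br a (m b) + br (m a) b) = 0"
    by (simp add: cbr_def mu_of_def zero_prod_def scaleR_2 algebra_simps)
  then show ?thesis
    using skew[of "m a" b] by simp
qed

lemmas subspace_center = subspace_lie_center[OF bil]

lemma J_center: "x \<in> lie_center br \<Longrightarrow> J x \<in> lie_center br"
  unfolding lie_center_def by simp

end

section \<open>The form \<open>E\<close> and the rank of the bracket\<close>

locale center_coordinate = abelian_complex +
  fixes \<kappa> :: "'a \<Rightarrow> complex"
  assumes two_step: "\<And>x y z. br x (br y z) = 0"
    and linear_\<kappa>: "linear \<kappa>" and \<kappa>_J[simp]: "\<And>x. \<kappa> (J x) = \<i> * \<kappa> x"
    and \<kappa>_inj: "\<And>x. x \<in> lie_center br \<Longrightarrow> \<kappa> x = 0 \<Longrightarrow> x = 0"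
begin

lemmas \<kappa>_simps[simp] = linear_add[OF linear_\<kappa>] linear_diff[OF linear_\<kappa>]
  linear_neg[OF linear_\<kappa>] linear_0[OF linear_\<kappa>]

lemma \<kappa>_scaleR[simp]: "\<kappa> (r *\<^sub>R x) = of_real r * \<kappa> x"
  by (simp add: linear_scale[OF linear_\<kappa>] scaleR_conv_of_real)

lemma br_in_center: "br x y \<in> lie_center br"
proof -
  have "br (br x y) a = 0" for a
    using skew[of "br x y" a] two_step[of a x y] by simp
  then show ?thesis
    by (simp add: lie_center_def)
qed

lemma \<kappa>_eq_center: "x \<in> lie_center br \<Longrightarrow> y \<in> lie_center br \<Longrightarrow> \<kappa> x = \<kappa> y \<Longrightarrow> x = y"
  using \<kappa>_inj[of "x - y"] subspace_diff[OF subspace_center] by auto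

text \<open>Up to the constant factor \<open>2 \<kappa> Z\<close>, \<open>E X\<^sub>k X\<^sub>j\<close> is the coefficient \<open>E\<^sub>k\<^sub>j\<close> of \<open>W\<close> in
  \<open>[conj T\<^sub>k, T\<^sub>j]\<close>: the complex-linear extension of \<open>\<kappa>\<close> kills \<open>conj W\<close>.\<close>
definition E :: "'a \<Rightarrow> 'a \<Rightarrow> complex" where
  "E a v = \<kappa> (br a v) - \<i> * \<kappa> (br a (J v))"

lemma E_add_left[simp]: "E (x + y) v = E x v + E y v"
  and E_add_right[simp]: "E a (x + y) = E a x + E a y"
  and E_diff_left[simp]: "E (x - y) v = E x v - E y v"
  and E_diff_right[simp]: "E a (x - y) = E a x - E a y"
  and E_minus_left[simp]: "E (- x) v = - E x v"
  and E_minus_right[simp]: "E a (- x) = - E a x"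
  and E_scaleR_left[simp]: "E (r *\<^sub>R x) v = of_real r * E x v"
  and E_scaleR_right[simp]: "E a (r *\<^sub>R x) = of_real r * E a x"
  and E_J_left[simp]: "E (J x) v = - \<i> * E x v"
  and E_J_right[simp]: "E a (J x) = \<i> * E a x"
  by (simp_all add: E_def algebra_simps)

lemma E_swap: "E v a = - \<kappa> (br a v) - \<i> * \<kappa> (br a (J v))"
  using skew[of v a] skew[of v "J a"] by (simp add: E_def)

lemma \<kappa>_br_eq_E: "\<kappa> (br a v) = (E a v - E v a) / 2"
  unfolding E_def[of a v] E_swap[of v a] by simp

lemma E_complex_scale:
  shows "E x (Re k *\<^sub>R u + Im k *\<^sub>R J u) = k * E x u"
    and "E (Re k *\<^sub>R u + Im k *\<^sub>R J u) x = cnj k * E u x"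
proof -
  have "E x (Re k *\<^sub>R u + Im k *\<^sub>R J u) = (Re k + \<i> * Im k) * E x u"
    by (simp add: algebra_simps)
  also have "Re k + \<i> * Im k = k"
    by (rule complex_eq[symmetric])
  finally show "E x (Re k *\<^sub>R u + Im k *\<^sub>R J u) = k * E x u" .
  have "E (Re k *\<^sub>R u + Im k *\<^sub>R J u) x = (Re k - \<i> * Im k) * E u x"
    by (simp add: algebra_simps)
  also have "Re k - \<i> * Im k = cnj k"
    by (simp add: complex_eq_iff)
  finally show "E (Re k *\<^sub>R u + Im k *\<^sub>R J u) x = cnj k * E u x" .
qed

end

locale unobstructed = center_coordinate +
  assumes deformations:
    "\<And>\<mu>. form01_10 J \<mu> \<Longrightarrow> dbar_closed br J \<mu> \<Longrightarrow> generates_abelian_deformation br J \<mu>"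
begin

lemma dbar_closed_antilinear_symmetric:
  assumes "linear m" and "\<And>x. m (J x) = - J (m x)"
    and "\<And>a b. br a (J (m b)) - br b (J (m a)) = - J (br a (m b) - br b (m a))"
  shows "br a (m b) = br b (m a)"
  using assms mu_of_first_order deformations form01_10_mu_of dbar_closed_mu_of by blast

lemma E_first_order:
  assumes sym: "\<And>a b. E b u * E a v = E a u * E b v"
  shows "cnj (E b u) * E v a = cnj (E a u) * E v b"
proof -
  define \<alpha> where "\<alpha> x = Re (E x u)" for x
  define m where "m x = \<alpha> x *\<^sub>R v + \<alpha> (J x) *\<^sub>R J v" for x
  have E_u: "E x u = of_real (\<alpha> x) + \<i> * of_real (\<alpha> (J x))" for x
    by (simp add: \<alpha>_def complex_eq_iff)
  have lm: "linear m"
    unfolding linear_iff m_def \<alpha>_def by (simp add: algebra_simps)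
  have anti: "m (J x) = - J (m x)" for x
    by (simp add: m_def \<alpha>_def)
  \<comment> \<open>\<open>mu_of m\<close> sends \<open>a + i J a\<close> to \<open>E a u (v - i J v)\<close>. By \<open>I1\<close> it is \<open>\<partial>\<close>-bar-closed
    iff \<open>E _ u * E _ v\<close> is symmetric, which is the hypothesis; \<open>I2\<close> turns its first-order
    obstruction into the claim.\<close>
  have I1: "\<kappa> (br a (J (m b))) + \<i> * \<kappa> (br a (m b)) = \<i> * E b u * E a v" for a b
    unfolding E_u E_def[of a v] by (simp add: m_def algebra_simps)
  have I2: "\<kappa> (br a (J (m b))) - \<i> * \<kappa> (br a (m b)) = \<i> * cnj (E b u) * E v a" for a b
    unfolding E_u E_swap[of v a] by (simp add: m_def algebra_simps)
  have closed: "br a (J (m b)) - br b (J (m a)) = - J (br a (m b) - br b (m a))" for a b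
  proof (rule \<kappa>_eq_center)
    show "br a (J (m b)) - br b (J (m a)) \<in> lie_center br"
      "- J (br a (m b) - br b (m a)) \<in> lie_center br"
      by (intro subspace_diff[OF subspace_center] subspace_neg[OF subspace_center] J_center
          br_in_center)+
    show "\<kappa> (br a (J (m b)) - br b (J (m a))) = \<kappa> (- J (br a (m b) - br b (m a)))"
      using I1[of a b] I1[of b a] sym[of a b] by (simp add: algebra_simps)
  qed
  have "br a (m b) = br b (m a)" for a b
    by (rule dbar_closed_antilinear_symmetric[OF lm anti closed])
  with closed have "br a (J (m b)) = br b (J (m a))" for a b
    by simp
  then show ?thesis
    using I2[of a b] I2[of b a] \<open>\<And>a b. br a (m b) = br b (m a)\<close> by simp
qed

lemma E_conj_sym: "cnj (E b w) * E w a = cnj (E a w) * E w b"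
  by (rule E_first_order) (simp add: mult.commute)

lemma E_conj_sym_polarized:
  "cnj (E b u) * E v a + cnj (E b v) * E u a = cnj (E a u) * E v b + cnj (E a v) * E u b"
  using E_conj_sym[of b "u + v" a] E_conj_sym[of b u a] E_conj_sym[of b v a]
  by (simp add: algebra_simps)

lemma E_right_eq_0: "(\<And>x. E x w = 0) \<Longrightarrow> E w a = 0"
  using E_first_order[of a w w a] by simp

lemma E_transpose_conj: "\<exists>\<rho>. \<forall>x. E u x = \<rho> * cnj (E x u)"
proof (cases "\<forall>x. E x u = 0")
  case True
  then show ?thesis
    using E_right_eq_0 by auto
next
  case False
  then obtain a0 where "E a0 u \<noteq> 0"
    by blast
  then have "E u x = E u a0 / cnj (E a0 u) * cnj (E x u)" for x
    using E_conj_sym[of a0 u x] by (simp add: field_simps)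
  then show ?thesis
    by blast
qed

lemma E_proportional:
  assumes sym: "\<And>a b. E b u * E a v = E a u * E b v" and "E a0 u \<noteq> 0"
  shows "\<exists>k. \<forall>x. E x v = k * E x u \<and> E v x = cnj k * E u x"
proof -
  define k where "k = E a0 v / E a0 u"
  have left: "E x v = k * E x u" for x
    using sym[of x a0] \<open>E a0 u \<noteq> 0\<close> by (simp add: k_def field_simps)
  define w where "w = v - (Re k *\<^sub>R u + Im k *\<^sub>R J u)"
  \<comment> \<open>\<open>w = v - k u\<close> with \<open>k\<close> acting through \<open>J\<close>; it lies in the left kernel of \<open>E\<close>\<close>
  have "E x w = 0" for x
    unfolding w_def E_diff_right E_complex_scale using left by simp
  then have "E w x = 0" for x
    by (rule E_right_eq_0)
  then show ?thesis
    unfolding w_def E_diff_left E_complex_scale using left by auto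
qed

lemma E_transpose_conj_unique:
  assumes \<rho>u: "\<And>x. E u x = \<rho>u * cnj (E x u)" and \<rho>v: "\<And>x. E v x = \<rho>v * cnj (E x v)"
    and "E a0 u \<noteq> 0" and "E b0 v \<noteq> 0"
  shows "\<rho>u = \<rho>v"
proof (rule ccontr)
  assume "\<rho>u \<noteq> \<rho>v"
  have "E b u * E a v = E a u * E b v" for a b
  proof -
    have "(\<rho>v - \<rho>u) * (cnj (E b u) * cnj (E a v) - cnj (E a u) * cnj (E b v)) = 0"
      using E_conj_sym_polarized[of a u v b] unfolding \<rho>u \<rho>v by (simp add: algebra_simps)
    then have "cnj (E b u * E a v) = cnj (E a u * E b v)"
      using \<open>\<rho>u \<noteq> \<rho>v\<close> by simp
    then show ?thesis
      by (simp only: complex_cnj_cancel_iff)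
  qed
  then obtain k where k: "\<And>x. E x v = k * E x u" "\<And>x. E v x = cnj k * E u x"
    using E_proportional \<open>E a0 u \<noteq> 0\<close> by metis
  have "k \<noteq> 0" "E b0 u \<noteq> 0"
    using k(1)[of b0] \<open>E b0 v \<noteq> 0\<close> by auto
  have "\<rho>v * (cnj k * cnj (E b0 u)) = E v b0"
    using \<rho>v[of b0] k(1)[of b0] by simp
  also have "\<dots> = \<rho>u * (cnj k * cnj (E b0 u))"
    using k(2)[of b0] \<rho>u[of b0] by simp
  finally show False
    using \<open>k \<noteq> 0\<close> \<open>E b0 u \<noteq> 0\<close> \<open>\<rho>u \<noteq> \<rho>v\<close> by simp
qed

lemma E_conj_exchange: "E v a * cnj (E c u) = E u c * cnj (E a v)"
proof -
  obtain \<rho>u \<rho>v where \<rho>u: "\<And>x. E u x = \<rho>u * cnj (E x u)" and \<rho>v: "\<And>x. E v x = \<rho>v * cnj (E x v)"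
    using E_transpose_conj by metis
  consider "\<forall>x. E x u = 0" | "\<forall>x. E x v = 0" | a0 b0 where "E a0 u \<noteq> 0" "E b0 v \<noteq> 0"
    by blast
  then show ?thesis
  proof cases
    case 1
    then show ?thesis
      using E_right_eq_0[of u c] by simp
  next
    case 2
    then show ?thesis
      using E_right_eq_0[of v a] by simp
  next
    case 3
    then have "\<rho>u = \<rho>v"
      by (rule E_transpose_conj_unique[OF \<rho>u \<rho>v])
    then show ?thesis
      unfolding \<rho>u \<rho>v by (simp add: algebra_simps)
  qed
qed

lemma \<kappa>_br_real_ratio: "Im (cnj (\<kappa> (br a v)) * \<kappa> (br c u)) = 0"
proof -
  define Z where "Z = cnj (E a v - E v a) * (E c u - E u c)"
  have "cnj Z = Z"
    using E_conj_exchange[of v a c u] E_conj_exchange[of a v c u] E_conj_exchange[of v a u c]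
      E_conj_exchange[of a v u c]
    by (simp add: Z_def algebra_simps)
  then have "Im Z = 0"
    by (metis cnj.sel(2) neg_equal_zero)
  moreover have "cnj (\<kappa> (br a v)) * \<kappa> (br c u) = Z / 4"
    by (simp add: \<kappa>_br_eq_E Z_def)
  ultimately show ?thesis
    by (simp only: Im_divide_numeral)
qed

lemma bracket_collinear:
  assumes "br a v \<noteq> 0"
  shows "br x y \<in> span {br a v}"
proof -
  define b where "b = \<kappa> (br a v)"
  have "b \<noteq> 0"
    using assms \<kappa>_inj[OF br_in_center] by (auto simp: b_def)
  define r where "r = Re (\<kappa> (br x y) / b)"
  have "Im (\<kappa> (br x y) / b) = 0"
    using \<kappa>_br_real_ratio[of a v x y] by (simp add: Im_complex_div_eq_0 b_def mult.commute)
  then have "\<kappa> (br x y) / b = of_real r"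
    by (simp add: r_def complex_eq_iff)
  then have "\<kappa> (br x y) = \<kappa> (r *\<^sub>R br a v)"
    using \<open>b \<noteq> 0\<close> by (simp add: b_def field_simps)
  then have "br x y = r *\<^sub>R br a v"
    by (rule \<kappa>_eq_center[OF br_in_center subspace_scale[OF subspace_center br_in_center]])
  then show ?thesis
    by (simp add: span_base span_scale)
qed

lemma bracket_rank_one: "\<exists>z\<in>lie_center br. z \<noteq> 0 \<and> (\<forall>x y. br x y \<in> span {z})"
proof (cases "\<forall>x y. br x y = 0")
  case True
  obtain z :: 'a where "z \<noteq> 0"
    using nonzero_Basis by blast
  then show ?thesis
    using True by (intro bexI[of _ z]) (auto simp: lie_center_def span_zero)
next
  case False
  then show ?thesis
    using bracket_collinear br_in_center by blast
qed

end

theorem theorem5p4: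
  fixes br :: "'a::euclidean_space \<Rightarrow> 'a \<Rightarrow> 'a" and J :: "'a \<Rightarrow> 'a"
  assumes "lie_algebra br"
    and "two_step_nilpotent br"
    and "rational_structure br"
    and "abelian_complex_structure br J"
    and "dim (lie_center br) = 2"
    and "\<forall>\<mu>. form01_10 J \<mu> \<and> dbar_closed br J \<mu> \<longrightarrow> generates_abelian_deformation br J \<mu>"
  shows "\<exists>n. DIM('a) = 2*n+2 \<and> iso_heis_plus_R br n"
proof -
  have lie: "bilinear br" "\<And>x y. br x y = - br y x"
    using assms(1) unfolding lie_algebra_def by blast+
  have cx: "linear J" "\<And>a. J (J a) = - a" "\<And>a b. br (J a) (J b) = br a b"
    using assms(4) unfolding abelian_complex_structure_def by blast+
  interpret abelian_complex br J
    by (rule abelian_complex.intro[OF lie cx])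
  obtain \<kappa> :: "'a \<Rightarrow> complex" where
    \<kappa>: "linear \<kappa>" "\<And>x. \<kappa> (J x) = \<i> * \<kappa> x" "\<And>x. x \<in> lie_center br \<Longrightarrow> \<kappa> x = 0 \<Longrightarrow> x = 0"
    using complex_coordinate_exists[OF linJ JJ J_center assms(5)] by blast
  have two_step: "\<And>x y z. br x (br y z) = 0"
    using assms(2) unfolding two_step_nilpotent_def by blast
  interpret unobstructed br J \<kappa>
    by (intro unobstructed.intro center_coordinate.intro center_coordinate_axioms.intro
        unobstructed_axioms.intro abelian_complex_axioms two_step \<kappa>)
      (use assms(6) in auto)
  obtain z where "z \<in> lie_center br" "z \<noteq> 0" "\<And>x y. br x y \<in> span {z}"
    using bracket_rank_one by blast
  then show ?thesis
    by (rule iso_heis_plus_R_if_bracket_rank_one[OF bil skew _ _ _ assms(5)])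
qed

end
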